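(* Let $G$ be the final graph of the uncoordinated construction (described in the context) on a set $P\subset\mathbb{R}^d$ of $n$ points with parameter $s>1$, and let $\alpha$ be the aspect ratio of $P$. Then every vertex of $G$ has degree $O(\lg\alpha\cdot s^d)$, and the average degree of $G$ is $O(s^d)$, where the implied constants depend only on $d$.
   Context: Fix $d\ge 1$; $|xy|$ is Euclidean distance; $\lg$ is logarithm base 2. The aspect ratio is $\alpha=\max_{u,v\in P}|uv|/\min_{u\ne v\in P}|uv|$. Uncoordinated construction: start with the graph $G$ on vertex set $P$ with no edges. Every ordered pair $(p,q)$ of distinct points of $P$ is processed exactly once, in an arbitrary order, one at a time. When $(p,q)$ is processed, the edge $pq$ is added to $G$ unless $G$ currently contains an edge whose endpoints can be labeled $p',q'$ with $|pp'|\le |p'q'|/(2s+2)$ and $|qq'|\le |p'q'|/(2s+2)$. $G$ is the graph after all pairs are processed. *)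

theory Defs
  imports "HOL-Analysis.Analysis"
begin

text \<open>Edges of the (undirected) graph are represented as 2-element sets.\<close>

definition blocked :: "real \<Rightarrow> 'a::euclidean_space set set \<Rightarrow> 'a \<Rightarrow> 'a \<Rightarrow> bool" where
  "blocked s E p q \<longleftrightarrow>
     (\<exists>p' q'. {p', q'} \<in> E \<and> dist p p' \<le> dist p' q' / (2 * s + 2)
                          \<and> dist q q' \<le> dist p' q' / (2 * s + 2))"

definition process_pair :: "real \<Rightarrow> 'a::euclidean_space set set \<Rightarrow> 'a \<times> 'a \<Rightarrow> 'a set set" where
  "process_pair s E pq = (if blocked s E (fst pq) (snd pq) then E else insert {fst pq, snd pq} E)"

definition uncoord_graph :: "real \<Rightarrow> ('a::euclidean_space \<times> 'a) list \<Rightarrow> 'a set set" where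
  "uncoord_graph s ord = foldl (process_pair s) {} ord"

definition degree :: "'a set set \<Rightarrow> 'a \<Rightarrow> nat" where
  "degree E v = card {u. u \<noteq> v \<and> {v, u} \<in> E}"

definition aspect_ratio :: "'a::euclidean_space set \<Rightarrow> real" where
  "aspect_ratio P = Max {dist u v | u v. u \<in> P \<and> v \<in> P}
                    / Min {dist u v | u v. u \<in> P \<and> v \<in> P \<and> u \<noteq> v}"

end

theory Submission
  imports Defs
begin

text \<open>
  Call two distinct edges c-close if their endpoints can be matched so that each matched
  pair is at distance at most 1/c times the shorter edge. A pair is inserted only when it is
  not blocked, so the final graph has no (2s+2)-close edges. Consequently the neighbours of
  a vertex at distances in [r, 2r) are (r/c)-separated, and a packing argument bounds their
  number by O(s^d); the lg \<alpha> dyadic distance ranges give the degree bound.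

  For the average degree, charge each directed edge pq to the pair of dyadic grid cells
  containing p and q at the level where cells have diameter about |pq|/c. Absence of close
  edges makes this charge injective. Both cells are nodes of the compressed quadtree of P,
  and at the top level of the lower of the two nodes the other one is among the O(s^d)
  grid neighbours of it. The quadtree nodes form a laminar family, so there are at most 2n
  of them, which gives O(n s^d) edges.
\<close>

section \<open>The construction has no close edges\<close>

definition separated_edges :: "real \<Rightarrow> 'a::metric_space set set \<Rightarrow> bool" where
  "separated_edges c E \<longleftrightarrow>
     (\<forall>a b p q. {a, b} \<in> E \<longrightarrow> {p, q} \<in> E \<longrightarrow> {a, b} \<noteq> {p, q} \<longrightarrow>
        \<not> (dist a p \<le> min (dist a b) (dist p q) / c \<and> dist b q \<le> min (dist a b) (dist p q) / c))"

lemma blockedI: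
  assumes "{p', q'} \<in> E" "{x, y} = {p, q}"
    and "dist x p' \<le> dist p' q' / (2 * s + 2)" "dist y q' \<le> dist p' q' / (2 * s + 2)"
  shows "blocked s E p q"
proof -
  consider "x = p" "y = q" | "x = q" "y = p" using assms(2) by (auto simp: doubleton_eq_iff)
  then show ?thesis
  proof cases
    case 1
    then show ?thesis using assms unfolding blocked_def by blast
  next
    case 2
    have "{q', p'} \<in> E" using assms(1) by (simp add: insert_commute)
    with 2 assms(3,4) show ?thesis unfolding blocked_def by (metis dist_commute)
  qed
qed

lemma separated_edges_insert:
  assumes sep: "separated_edges c E" and "c > 0"
    and new_far: "\<And>x y p q. {x, y} = {a, b} \<Longrightarrow> {p, q} \<in> E \<Longrightarrow>
       dist x p \<le> dist p q / c \<Longrightarrow> dist y q \<le> dist p q / c \<Longrightarrow> False"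
  shows "separated_edges c (insert {a, b} E)"
  unfolding separated_edges_def
proof (intro allI impI notI)
  fix x y p q
  assume xy: "{x, y} \<in> insert {a, b} E" and pq: "{p, q} \<in> insert {a, b} E"
    and ne: "{x, y} \<noteq> {p, q}"
    and close: "dist x p \<le> min (dist x y) (dist p q) / c \<and> dist y q \<le> min (dist x y) (dist p q) / c"
  have le: "min (dist x y) (dist p q) / c \<le> dist x y / c"
           "min (dist x y) (dist p q) / c \<le> dist p q / c"
    using \<open>c > 0\<close> by (simp_all add: divide_right_mono)
  consider "{x, y} \<in> E" "{p, q} \<in> E" | "{x, y} = {a, b}" "{p, q} \<in> E" | "{p, q} = {a, b}" "{x, y} \<in> E"
    using xy pq ne by auto
  then show False
  proof cases
    case 1
    then show False using sep ne close unfolding separated_edges_def by blast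
  next
    case 2
    then show False using new_far[of x y p q] close le by linarith
  next
    case 3
    then show False using new_far[of p q x y] close le by (simp add: dist_commute)
  qed
qed

lemma separated_edges_process_pair:
  assumes "separated_edges (2 * s + 2) E" "s > 1"
  shows "separated_edges (2 * s + 2) (process_pair s E pq)"
proof (cases "blocked s E (fst pq) (snd pq)")
  case True
  then show ?thesis using assms by (simp add: process_pair_def)
next
  case False
  have "separated_edges (2 * s + 2) (insert {fst pq, snd pq} E)"
  proof (rule separated_edges_insert[OF assms(1)])
    show "2 * s + 2 > 0" using assms(2) by simp
    fix x y p q
    assume "{x, y} = {fst pq, snd pq}" "{p, q} \<in> E"
      "dist x p \<le> dist p q / (2 * s + 2)" "dist y q \<le> dist p q / (2 * s + 2)"
    from blockedI[OF this(2,1,3,4)] False show False by contradiction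
  qed
  then show ?thesis using False by (simp add: process_pair_def)
qed

lemma separated_edges_uncoord_graph:
  assumes "s > 1"
  shows "separated_edges (2 * s + 2) (uncoord_graph s ord)"
proof -
  have "separated_edges (2 * s + 2) (foldl (process_pair s) E ord)"
    if "separated_edges (2 * s + 2) E" for E
    using that by (induction ord arbitrary: E) (simp_all add: separated_edges_process_pair assms)
  moreover have "separated_edges (2 * s + 2) {}" by (simp add: separated_edges_def)
  ultimately show ?thesis unfolding uncoord_graph_def by blast
qed

lemma foldl_process_pair_subset:
  "foldl (process_pair s) E ord \<subseteq> E \<union> {{p, q} | p q. (p, q) \<in> set ord}"
proof (induction ord arbitrary: E)
  case (Cons pq ord)
  obtain a b where pq: "pq = (a, b)" by fastforce
  have step: "process_pair s E pq \<subseteq> insert {a, b} E" by (auto simp: process_pair_def pq)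
  have "foldl (process_pair s) E (pq # ord) \<subseteq> process_pair s E pq \<union> {{p, q} | p q. (p, q) \<in> set ord}"
    using Cons by simp
  also have "\<dots> \<subseteq> E \<union> {{p, q} | p q. (p, q) \<in> set (pq # ord)}"
    using step pq by auto
  finally show ?case .
qed simp

lemma uncoord_graph_edgeD:
  assumes "set ord = {(p, q). p \<in> P \<and> q \<in> P \<and> p \<noteq> q}" "{u, v} \<in> uncoord_graph s ord"
  shows "u \<in> P \<and> v \<in> P \<and> u \<noteq> v"
proof -
  obtain p q where "{u, v} = {p, q}" "(p, q) \<in> set ord"
    using assms(2) foldl_process_pair_subset[of s "{}" ord] unfolding uncoord_graph_def by blast
  then show ?thesis using assms(1) by (auto simp: doubleton_eq_iff)
qed

section \<open>Packing\<close>

lemma floor_eq_imp_abs_diff_less: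
  fixes x y h :: real
  assumes "\<lfloor>x / h\<rfloor> = \<lfloor>y / h\<rfloor>" "h > 0"
  shows "\<bar>x - y\<bar> < h"
proof -
  have "\<bar>x / h - y / h\<bar> < 1" using assms(1) by linarith
  moreover have "\<bar>x - y\<bar> = h * \<bar>x / h - y / h\<bar>"
    using assms(2) by (simp add: abs_mult diff_divide_distrib[symmetric])
  ultimately show ?thesis using assms(2) by simp
qed

lemma floor_divide_in_box:
  fixes t h :: real
  assumes "\<bar>t\<bar> \<le> real M * h" "h > 0"
  shows "\<lfloor>t / h\<rfloor> \<in> {- int M .. int M}"
proof -
  have "t / h \<le> real M" "- real M \<le> t / h"
    using assms by (simp_all add: pos_divide_le_eq pos_le_divide_eq)
  then have "\<lfloor>t / h\<rfloor> \<le> int M" "- int M \<le> \<lfloor>t / h\<rfloor>"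
    by (simp_all add: floor_le_iff le_floor_iff)
  then show ?thesis by simp
qed

lemma floor_divide_double: "\<lfloor>a / (2 * h)\<rfloor> = \<lfloor>a / h\<rfloor> div 2" for a h :: real
proof -
  have "a / (2 * h) = (a / h) / real_of_int 2" by simp
  then show ?thesis using floor_divide_real_eq_div[of 2 "a / h"] by (simp add: mult.commute)
qed

lemma norm_less_of_Basis_less:
  fixes x :: "'a::euclidean_space"
  assumes "\<And>i. i \<in> Basis \<Longrightarrow> \<bar>x \<bullet> i\<bar> < h"
  shows "norm x < real DIM('a) * h"
proof -
  have "norm x \<le> (\<Sum>i\<in>Basis. \<bar>x \<bullet> i\<bar>)" by (rule norm_le_l1)
  also have "\<dots> < (\<Sum>i\<in>(Basis::'a set). h)" by (rule sum_strict_mono) (auto simp: assms)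
  finally show ?thesis by simp
qed

lemma card_PiE_Basis_box:
  "card (PiE (Basis::'a::euclidean_space set) (\<lambda>i. {a i - int M .. a i + int M})) = (2 * M + 1) ^ DIM('a)"
proof -
  have "card {a i - int M .. a i + int M} = 2 * M + 1" for i by simp
  then show ?thesis by (simp add: card_PiE)
qed

text \<open>Points at mutual distance at least d h within distance M h of a centre
  lie in distinct cubes of side h of a grid of (2M+1)^d cubes.\<close>

lemma card_separated_in_ball_le:
  fixes S :: "'a::euclidean_space set"
  assumes "h > 0" and ball: "\<And>u. u \<in> S \<Longrightarrow> norm (u - v) \<le> real M * h"
    and sep: "\<And>u w. u \<in> S \<Longrightarrow> w \<in> S \<Longrightarrow> u \<noteq> w \<Longrightarrow> real DIM('a) * h \<le> dist u w"
  shows "card S \<le> (2 * M + 1) ^ DIM('a)"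
proof -
  define g where "g u = restrict (\<lambda>i. \<lfloor>((u - v) \<bullet> i) / h\<rfloor>) Basis" for u
  have "inj_on g S"
  proof (rule inj_onI, rule ccontr)
    fix u w assume u: "u \<in> S" and w: "w \<in> S" and eq: "g u = g w" and "u \<noteq> w"
    have "\<bar>(u - w) \<bullet> i\<bar> < h" if "i \<in> Basis" for i
    proof -
      have "\<lfloor>((u - v) \<bullet> i) / h\<rfloor> = \<lfloor>((w - v) \<bullet> i) / h\<rfloor>"
        using fun_cong[OF eq, of i] that by (simp add: g_def)
      from floor_eq_imp_abs_diff_less[OF this \<open>h > 0\<close>] show ?thesis
        by (simp add: inner_diff_left)
    qed
    then have "norm (u - w) < real DIM('a) * h" by (rule norm_less_of_Basis_less)
    with sep[OF u w \<open>u \<noteq> w\<close>] show False by (simp add: dist_norm)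
  qed
  moreover have "g ` S \<subseteq> PiE Basis (\<lambda>i. {0 - int M .. 0 + int M})"
  proof -
    have "\<lfloor>((u - v) \<bullet> i) / h\<rfloor> \<in> {- int M .. int M}" if "u \<in> S" "i \<in> Basis" for u i
      using floor_divide_in_box[OF order_trans[OF Basis_le_norm ball] \<open>h > 0\<close>] that by blast
    then show ?thesis unfolding g_def by (auto simp: PiE_iff)
  qed
  moreover have "finite (PiE (Basis::'a set) (\<lambda>i. {0 - int M .. 0 + int M}))"
    by (simp add: finite_PiE)
  ultimately have "card S \<le> card (PiE (Basis::'a set) (\<lambda>i. {0 - int M .. 0 + int M}))"
    by (rule card_inj_on_le)
  then show ?thesis using card_PiE_Basis_box[where a = "\<lambda>_. 0" and 'a = 'a] by simp
qed

section \<open>The degree bound\<close>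

definition pow2 :: "int \<Rightarrow> real" where
  "pow2 j = 2 powr real_of_int j"

lemma pow2_pos [simp]: "pow2 j > 0"
  by (simp add: pow2_def)

lemma pow2_plus_one: "pow2 (j + 1) = 2 * pow2 j"
  by (simp add: pow2_def powr_add)

lemma pow2_mono: "j \<le> k \<Longrightarrow> pow2 j \<le> pow2 k"
  by (simp add: pow2_def)

lemma pow2_of_nat [simp]: "pow2 (int n) = 2 ^ n"
  by (simp add: pow2_def powr_realpow)

lemma pow2_floor_log:
  assumes "t > 0"
  shows "pow2 \<lfloor>log 2 t\<rfloor> \<le> t" "t < 2 * pow2 \<lfloor>log 2 t\<rfloor>"
proof -
  have t: "t = 2 powr log 2 t" using assms by simp
  have "pow2 \<lfloor>log 2 t\<rfloor> \<le> 2 powr log 2 t" unfolding pow2_def by (intro powr_mono) auto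
  then show "pow2 \<lfloor>log 2 t\<rfloor> \<le> t" using t by simp
  have "2 powr log 2 t < 2 powr (real_of_int \<lfloor>log 2 t\<rfloor> + 1)" by (intro powr_less_mono) linarith+
  then show "t < 2 * pow2 \<lfloor>log 2 t\<rfloor>" using t by (simp add: pow2_def powr_add)
qed

lemma card_neighbours_in_annulus_le:
  fixes E :: "'a::euclidean_space set set"
  assumes sep: "separated_edges c E" and "c > 0" "r > 0"
    and M: "2 * c * real DIM('a) \<le> real M"
  shows "card {u. u \<noteq> v \<and> {v, u} \<in> E \<and> r \<le> dist v u \<and> dist v u < 2 * r} \<le> (2 * M + 1) ^ DIM('a)"
proof (rule card_separated_in_ball_le)
  define h where "h = r / (c * real DIM('a))"
  show "h > 0" using assms unfolding h_def by simp
  have "2 * r = 2 * c * real DIM('a) * h" unfolding h_def using \<open>c > 0\<close> by simp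
  also have "\<dots> \<le> real M * h" using M \<open>h > 0\<close> by (intro mult_right_mono) auto
  finally show "norm (u - v) \<le> real M * h"
    if "u \<in> {u. u \<noteq> v \<and> {v, u} \<in> E \<and> r \<le> dist v u \<and> dist v u < 2 * r}" for u
    using that by (simp add: dist_norm norm_minus_commute)
  fix u w
  assume u: "u \<in> {u. u \<noteq> v \<and> {v, u} \<in> E \<and> r \<le> dist v u \<and> dist v u < 2 * r}"
    and w: "w \<in> {u. u \<noteq> v \<and> {v, u} \<in> E \<and> r \<le> dist v u \<and> dist v u < 2 * r}"
    and "u \<noteq> w"
  then have "{v, u} \<noteq> {v, w}" by (auto simp: doubleton_eq_iff)
  then have "\<not> (dist v v \<le> min (dist v u) (dist v w) / c \<and> dist u w \<le> min (dist v u) (dist v w) / c)"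
    using sep u w unfolding separated_edges_def by blast
  then have "min (dist v u) (dist v w) / c < dist u w" using \<open>c > 0\<close> by simp
  moreover have "r / c \<le> min (dist v u) (dist v w) / c"
    using u w \<open>c > 0\<close> by (simp add: divide_right_mono)
  moreover have "real DIM('a) * h = r / c" unfolding h_def by simp
  ultimately show "real DIM('a) * h \<le> dist u w" by simp
qed

lemma degree_le_log_distance_ratio:
  fixes E :: "'a::euclidean_space set set"
  assumes sep: "separated_edges c E" and "c > 0" "\<delta> > 0"
    and M: "2 * c * real DIM('a) \<le> real M"
    and fin: "finite {u. u \<noteq> v \<and> {v, u} \<in> E}"
    and range: "\<And>u. u \<noteq> v \<Longrightarrow> {v, u} \<in> E \<Longrightarrow> \<delta> \<le> dist v u \<and> dist v u \<le> \<delta> * \<alpha>"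
  shows "degree E v \<le> (nat \<lfloor>log 2 \<alpha>\<rfloor> + 1) * (2 * M + 1) ^ DIM('a)"
proof -
  define K where "K = nat \<lfloor>log 2 \<alpha>\<rfloor>"
  define shell where "shell k = {u. u \<noteq> v \<and> {v, u} \<in> E \<and> \<delta> * 2 ^ k \<le> dist v u \<and> dist v u < 2 * (\<delta> * 2 ^ k)}"
    for k :: nat
  have cover: "{u. u \<noteq> v \<and> {v, u} \<in> E} \<subseteq> (\<Union>k\<le>K. shell k)"
  proof
    fix u assume "u \<in> {u. u \<noteq> v \<and> {v, u} \<in> E}"
    then have u: "u \<noteq> v" "{v, u} \<in> E" by auto
    define t where "t = dist v u / \<delta>"
    have "1 \<le> t" "t \<le> \<alpha>" using range[OF u] \<open>\<delta> > 0\<close> by (simp_all add: t_def field_simps)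
    define k where "k = nat \<lfloor>log 2 t\<rfloor>"
    have "int k = \<lfloor>log 2 t\<rfloor>" using \<open>1 \<le> t\<close> by (simp add: k_def)
    then have "pow2 \<lfloor>log 2 t\<rfloor> = 2 ^ k" by (metis pow2_of_nat)
    then have "2 ^ k \<le> t" "t < 2 * 2 ^ k" using pow2_floor_log[of t] \<open>1 \<le> t\<close> by simp_all
    then have "u \<in> shell k" using u \<open>\<delta> > 0\<close> by (simp add: shell_def t_def field_simps)
    moreover have "k \<le> K"
      using \<open>1 \<le> t\<close> \<open>t \<le> \<alpha>\<close> unfolding k_def K_def by (intro nat_mono floor_mono) simp
    ultimately show "u \<in> (\<Union>k\<le>K. shell k)" by blast
  qed
  have "degree E v \<le> card (\<Union>k\<le>K. shell k)"
  proof -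
    have "shell k \<subseteq> {u. u \<noteq> v \<and> {v, u} \<in> E}" for k by (auto simp: shell_def)
    then have "finite (\<Union>k\<le>K. shell k)" using fin by (blast intro: finite_subset)
    then show ?thesis unfolding degree_def using cover by (rule card_mono)
  qed
  also have "\<dots> \<le> (\<Sum>k\<le>K. card (shell k))" by (rule card_UN_le) simp
  also have "\<dots> \<le> (\<Sum>k\<le>K. (2 * M + 1) ^ DIM('a))"
    unfolding shell_def
    by (intro sum_mono card_neighbours_in_annulus_le[OF sep \<open>c > 0\<close> _ M]) (simp add: \<open>\<delta> > 0\<close>)
  finally show ?thesis by (simp add: K_def)
qed

section \<open>Laminar families\<close>

definition laminar :: "'a set set \<Rightarrow> bool" where
  "laminar F \<longleftrightarrow> (\<forall>S\<in>F. \<forall>T\<in>F. S \<subseteq> T \<or> T \<subseteq> S \<or> S \<inter> T = {})"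

lemma laminarD: "laminar F \<Longrightarrow> S \<in> F \<Longrightarrow> T \<in> F \<Longrightarrow> S \<subseteq> T \<or> T \<subseteq> S \<or> S \<inter> T = {}"
  unfolding laminar_def by blast

lemma laminar_subset: "laminar F \<Longrightarrow> G \<subseteq> F \<Longrightarrow> laminar G"
  unfolding laminar_def by (meson subsetD)

lemma laminar_image_Diff_singleton:
  assumes "laminar F" shows "laminar ((\<lambda>S. S - {x}) ` F)"
  unfolding laminar_def
proof (intro ballI)
  fix S' T' assume "S' \<in> (\<lambda>S. S - {x}) ` F" "T' \<in> (\<lambda>S. S - {x}) ` F"
  then obtain S T where ST: "S \<in> F" "T \<in> F" and "S' = S - {x}" "T' = T - {x}" by blast
  moreover have "S \<subseteq> T \<or> T \<subseteq> S \<or> S \<inter> T = {}" using laminarD[OF assms ST] .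
  ultimately show "S' \<subseteq> T' \<or> T' \<subseteq> S' \<or> S' \<inter> T' = {}" by blast
qed

lemma laminar_insert_eq_insert:
  assumes "laminar F" "{} \<notin> F" "B \<in> F" "T \<in> F" "insert x B \<in> F" "x \<notin> B" "x \<notin> T"
    and "insert x B \<subseteq> insert x T"
  shows "insert x B = insert x T"
proof -
  consider "insert x B \<subseteq> T" | "T \<subseteq> insert x B" | "insert x B \<inter> T = {}"
    using laminarD[OF assms(1,5,4)] by blast
  then show ?thesis
  proof cases
    case 1
    then show ?thesis using assms(7) by blast
  next
    case 2
    then show ?thesis using assms(8) by blast
  next
    case 3
    then have "B = {}" using assms(6,8) by blast
    then show ?thesis using assms(2,3) by simp
  qed
qed

lemma Diff_singleton_eq_Diff_singletonD:
  assumes "S - {x} = T - {x}" "S \<noteq> T"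
  shows "x \<notin> T \<and> S = insert x T \<or> x \<notin> S \<and> T = insert x S"
proof (cases "x \<in> S")
  case True
  then have "S = insert x T" by (metis assms(1) insert_Diff insert_Diff_single)
  then show ?thesis using assms(2) by (metis insert_absorb)
next
  case False
  then have "T = insert x S" by (metis assms insert_Diff insert_Diff_single Diff_insert_absorb)
  then show ?thesis using False by blast
qed

text \<open>Removing a point merges at most one pair of members of a laminar family:
  the two members of every merged pair differ by the removed point x, and all members
  containing x form a chain, in which only the lowest step can be a single point.\<close>

lemma card_laminar_le_card_image_Diff_singleton:
  assumes lam: "laminar F" and "{} \<notin> F" "finite F"
  shows "card F \<le> card ((\<lambda>S. S - {x}) ` F) + 1"
proof (cases "inj_on (\<lambda>S. S - {x}) F")
  case True
  then show ?thesis by (simp add: card_image)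
next
  case False
  then obtain S T where ST: "S \<in> F" "T \<in> F" "S \<noteq> T" "S - {x} = T - {x}"
    unfolding inj_on_def by blast
  obtain B0 where B0: "x \<notin> B0" "B0 \<in> F" "insert x B0 \<in> F"
    using Diff_singleton_eq_Diff_singletonD[OF ST(4,3)] ST(1,2) by metis
  have unique: "insert x B = insert x B0" if "x \<notin> B" "B \<in> F" "insert x B \<in> F" for B
    using laminarD[OF lam that(3) B0(3)]
      laminar_insert_eq_insert[OF lam \<open>{} \<notin> F\<close> that(2) B0(2) that(3) that(1) B0(1)]
      laminar_insert_eq_insert[OF lam \<open>{} \<notin> F\<close> B0(2) that(2) B0(3) B0(1) that(1)]
    by blast
  have "inj_on (\<lambda>S. S - {x}) (F - {insert x B0})"
  proof (rule inj_onI, rule ccontr)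
    fix S T assume "S \<in> F - {insert x B0}" "T \<in> F - {insert x B0}" "S - {x} = T - {x}" "S \<noteq> T"
    then show False
      using Diff_singleton_eq_Diff_singletonD[of S x T] unique[of S] unique[of T] by auto
  qed
  then have "card (F - {insert x B0}) = card ((\<lambda>S. S - {x}) ` (F - {insert x B0}))"
    by (rule card_image[symmetric])
  also have "\<dots> \<le> card ((\<lambda>S. S - {x}) ` F)"
    by (intro card_mono finite_imageI image_mono Diff_subset \<open>finite F\<close>)
  finally show ?thesis using \<open>finite F\<close> B0(3) by (simp add: card_Diff_singleton)
qed

theorem card_laminar_le:
  assumes "finite V" "laminar F" "\<And>S. S \<in> F \<Longrightarrow> S \<noteq> {} \<and> S \<subseteq> V"
  shows "card F \<le> 2 * card V"
  using assms
proof (induction V arbitrary: F rule: finite_induct)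
  case empty
  then have "F = {}" by blast
  then show ?case by simp
next
  case (insert x V)
  define F' where "F' = (\<lambda>S. S - {x}) ` F - {{}}"
  have "finite F" using finite_subset[of F "Pow (insert x V)"] insert.hyps(1) insert.prems(2) by blast
  have "card F' \<le> 2 * card V"
  proof (rule insert.IH)
    show "laminar F'" unfolding F'_def
      by (rule laminar_subset[OF laminar_image_Diff_singleton[OF insert.prems(1)]]) blast
    show "S \<noteq> {} \<and> S \<subseteq> V" if "S \<in> F'" for S using that insert.prems(2) unfolding F'_def by blast
  qed
  moreover have "card F \<le> card ((\<lambda>S. S - {x}) ` F) + 1"
    using card_laminar_le_card_image_Diff_singleton[OF insert.prems(1) _ \<open>finite F\<close>] insert.prems(2) by blast
  moreover have "card ((\<lambda>S. S - {x}) ` F) \<le> card F' + 1"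
    unfolding F'_def using \<open>finite F\<close>
    by (cases "{} \<in> (\<lambda>S. S - {x}) ` F") (simp_all add: card_Diff_singleton)
  ultimately show ?case using insert.hyps by simp
qed

section \<open>Dyadic grid cells and the average degree\<close>

locale dyadic_grid =
  fixes P :: "'a::euclidean_space set" and R :: real and J :: int
  assumes finite_P: "finite P"
    and norm_le_R: "\<And>p. p \<in> P \<Longrightarrow> norm p \<le> R"
    and R_less_pow2_J: "2 * R < pow2 J"
begin

text \<open>Coordinates are shifted by R so that at level J and above all of P lies in one cell.\<close>

definition grid_index :: "int \<Rightarrow> 'a \<Rightarrow> 'a \<Rightarrow> int" where
  "grid_index j x = restrict (\<lambda>i. \<lfloor>(x \<bullet> i + R) / pow2 j\<rfloor>) Basis"

definition cell :: "int \<Rightarrow> 'a \<Rightarrow> 'a set" where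
  "cell j x = {y \<in> P. grid_index j y = grid_index j x}"

lemma grid_index_eq_plus_one:
  assumes "grid_index j y = grid_index j x"
  shows "grid_index (j + 1) y = grid_index (j + 1) x"
proof
  fix i
  show "grid_index (j + 1) y i = grid_index (j + 1) x i"
  proof (cases "i \<in> Basis")
    case True
    then have "\<lfloor>(y \<bullet> i + R) / pow2 j\<rfloor> = \<lfloor>(x \<bullet> i + R) / pow2 j\<rfloor>"
      using fun_cong[OF assms, of i] by (simp add: grid_index_def)
    then show ?thesis using True by (simp add: grid_index_def pow2_plus_one floor_divide_double)
  qed (simp add: grid_index_def)
qed

lemma grid_index_eq_mono:
  assumes "j \<le> k" "grid_index j y = grid_index j x"
  shows "grid_index k y = grid_index k x"
  using assms(1)
proof (induction k rule: int_ge_induct)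
  case (step k)
  then show ?case using grid_index_eq_plus_one by blast
qed (fact assms(2))

lemma cell_mono: "j \<le> k \<Longrightarrow> cell j x \<subseteq> cell k x"
  unfolding cell_def using grid_index_eq_mono by blast

lemma in_cell_self: "x \<in> P \<Longrightarrow> x \<in> cell j x"
  by (simp add: cell_def)

lemma cell_subset: "cell j x \<subseteq> P"
  by (auto simp: cell_def)

lemma cell_eq: "y \<in> cell j x \<Longrightarrow> cell j y = cell j x"
  by (auto simp: cell_def)

lemma dist_less_if_in_cell:
  assumes "y \<in> cell j x"
  shows "dist x y < real DIM('a) * pow2 j"
proof -
  have "\<bar>(x - y) \<bullet> i\<bar> < pow2 j" if i: "i \<in> Basis" for i
  proof -
    have "grid_index j y = grid_index j x" using assms by (simp add: cell_def)
    from fun_cong[OF this, of i] i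
    have "\<lfloor>(x \<bullet> i + R) / pow2 j\<rfloor> = \<lfloor>(y \<bullet> i + R) / pow2 j\<rfloor>"
      by (simp add: grid_index_def)
    from floor_eq_imp_abs_diff_less[OF this pow2_pos] show ?thesis by (simp add: inner_diff_left)
  qed
  then show ?thesis unfolding dist_norm by (rule norm_less_of_Basis_less)
qed

lemma grid_index_diff_less:
  assumes "i \<in> Basis"
  shows "\<bar>grid_index j x i - grid_index j y i\<bar> < dist x y / pow2 j + 1"
proof -
  have "\<bar>(x \<bullet> i + R) / pow2 j - (y \<bullet> i + R) / pow2 j\<bar> = \<bar>(x - y) \<bullet> i\<bar> / pow2 j"
    by (simp add: diff_divide_distrib[symmetric] inner_diff_left abs_div_pos)
  also have "\<dots> \<le> dist x y / pow2 j"
    using Basis_le_norm[OF assms, of "x - y"] less_imp_le[OF pow2_pos]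
    by (simp add: dist_norm divide_right_mono)
  finally show ?thesis using assms by (simp add: grid_index_def) linarith
qed

lemma cell_eq_P:
  assumes "J \<le> j" "x \<in> P"
  shows "cell j x = P"
proof -
  have "grid_index j z = grid_index j x" if "z \<in> P" for z
  proof -
    have "grid_index j y = restrict (\<lambda>i. 0) Basis" if "y \<in> P" for y
    proof
      fix i
      show "grid_index j y i = restrict (\<lambda>i. 0) Basis i"
      proof (cases "i \<in> Basis")
        case True
        have "\<bar>y \<bullet> i\<bar> \<le> R" using Basis_le_norm[OF True, of y] norm_le_R[OF \<open>y \<in> P\<close>] by simp
        moreover have "2 * R < pow2 j" using R_less_pow2_J pow2_mono[OF assms(1)] by simp
        ultimately have "\<lfloor>(y \<bullet> i + R) / pow2 j\<rfloor> = 0" by (simp add: floor_eq_iff divide_less_eq)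
        then show ?thesis using True by (simp add: grid_index_def)
      qed (simp add: grid_index_def)
    qed
    then show ?thesis using that assms(2) by simp
  qed
  then show ?thesis unfolding cell_def by auto
qed

lemma laminar_cells: "laminar {cell j x | j x. x \<in> P}"
  unfolding laminar_def
proof (intro ballI)
  fix S T assume "S \<in> {cell j x | j x. x \<in> P}" "T \<in> {cell j x | j x. x \<in> P}"
  then obtain j k x y where S: "S = cell j x" and T: "T = cell k y" by blast
  have "S \<subseteq> T" if "z \<in> S" "z \<in> T" "j \<le> k" for z
    using cell_eq[of z j x] cell_eq[of z k y] cell_mono[OF \<open>j \<le> k\<close>, of z] that S T by simp
  moreover have "T \<subseteq> S" if "z \<in> S" "z \<in> T" "k \<le> j" for z
    using cell_eq[of z j x] cell_eq[of z k y] cell_mono[OF \<open>k \<le> j\<close>, of z] that S T by simp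
  ultimately show "S \<subseteq> T \<or> T \<subseteq> S \<or> S \<inter> T = {}" by (meson disjoint_iff linorder_le_cases)
qed

text \<open>The nodes of the compressed quadtree of P other than its root.\<close>

definition proper_cells :: "'a set set" where
  "proper_cells = {cell j x | j x. x \<in> P} - {P}"

lemma finite_proper_cells: "finite proper_cells"
  using finite_P cell_subset unfolding proper_cells_def by (auto intro: finite_subset[of _ "Pow P"])

lemma card_proper_cells_le: "card proper_cells \<le> 2 * card P"
proof (rule card_laminar_le[OF finite_P])
  show "laminar proper_cells"
    unfolding proper_cells_def by (rule laminar_subset[OF laminar_cells]) blast
  show "S \<noteq> {} \<and> S \<subseteq> P" if "S \<in> proper_cells" for S
    using that in_cell_self cell_subset unfolding proper_cells_def by blast
qed

lemma proper_cell_level_less: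
  assumes "S \<in> proper_cells" "x \<in> P" "cell j x = S"
  shows "j < J"
  using assms cell_eq_P[of j x] unfolding proper_cells_def by force

text \<open>The highest level at which S is a cell; proper cells only occur below level J.\<close>

definition level :: "'a set \<Rightarrow> int" where
  "level S = J - int (LEAST k. \<exists>x\<in>P. cell (J - int k) x = S)"

lemma level_cell:
  assumes "S \<in> proper_cells"
  shows "\<exists>x\<in>P. cell (level S) x = S"
    and "\<And>x j. x \<in> P \<Longrightarrow> cell j x = S \<Longrightarrow> j \<le> level S"
proof -
  define Q where "Q k \<longleftrightarrow> (\<exists>x\<in>P. cell (J - int k) x = S)" for k
  have Q: "Q (nat (J - j))" if "x \<in> P" "cell j x = S" for x j
  proof -
    have "J - int (nat (J - j)) = j" using proper_cell_level_less[OF assms that] by simp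
    then show ?thesis unfolding Q_def using that by metis
  qed
  obtain x j where "x \<in> P" "cell j x = S" using assms unfolding proper_cells_def by blast
  from LeastI[of Q, OF Q[OF this]] show "\<exists>x\<in>P. cell (level S) x = S"
    unfolding Q_def level_def by simp
  fix y i assume "y \<in> P" "cell i y = S"
  from Least_le[of Q, OF Q[OF this]] proper_cell_level_less[OF assms this]
  show "i \<le> level S" unfolding level_def Q_def[symmetric] by linarith
qed

lemma cell_level:
  assumes "S \<in> proper_cells" "x \<in> S"
  shows "cell (level S) x = S"
  using level_cell(1)[OF assms(1)] assms(2) cell_eq by blast

text \<open>The level at which an edge pq is charged: cells there have diameter at most |pq|/c.\<close>

definition edge_level :: "real \<Rightarrow> 'a \<Rightarrow> 'a \<Rightarrow> int" where
  "edge_level c p q = \<lfloor>log 2 (dist p q / (c * real DIM('a)))\<rfloor>"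

lemma edge_level_commute: "edge_level c p q = edge_level c q p"
  by (simp add: edge_level_def dist_commute)

lemma edge_level_bounds:
  assumes "p \<noteq> q" "c > 0"
  shows "real DIM('a) * pow2 (edge_level c p q) \<le> dist p q / c"
    and "dist p q < 2 * c * real DIM('a) * pow2 (edge_level c p q)"
proof -
  have "dist p q / (c * real DIM('a)) > 0" using assms by simp
  note bounds = pow2_floor_log[OF this, folded edge_level_def]
  show "real DIM('a) * pow2 (edge_level c p q) \<le> dist p q / c"
    using bounds(1) assms by (simp add: field_simps)
  show "dist p q < 2 * c * real DIM('a) * pow2 (edge_level c p q)"
    using bounds(2) assms by (simp add: field_simps)
qed

lemma not_in_cell_edge_level:
  assumes "p \<noteq> q" "c > 1"
  shows "q \<notin> cell (edge_level c p q) p"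
proof
  assume "q \<in> cell (edge_level c p q) p"
  then have "dist p q < real DIM('a) * pow2 (edge_level c p q)" by (rule dist_less_if_in_cell)
  moreover have "dist p q / c < dist p q" using assms by (simp add: divide_less_eq)
  ultimately show False using edge_level_bounds(1)[of p q c] assms by linarith
qed

text \<open>All points of S share their grid index at level S, so the choice of a point
  of S below is immaterial.\<close>

definition neighbour_cells :: "nat \<Rightarrow> 'a set \<Rightarrow> 'a set set" where
  "neighbour_cells M S = (\<lambda>\<kappa>. {y \<in> P. grid_index (level S) y = \<kappa>}) `
     PiE Basis (\<lambda>i. {grid_index (level S) (SOME x. x \<in> S) i - int M ..
                     grid_index (level S) (SOME x. x \<in> S) i + int M})"

lemma card_neighbour_cells_le: "card (neighbour_cells M S) \<le> (2 * M + 1) ^ DIM('a)"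
  unfolding neighbour_cells_def
  by (rule order_trans[OF card_image_le card_PiE_Basis_box[THEN eq_imp_le]]) (simp add: finite_PiE)

lemma finite_neighbour_cells: "finite (neighbour_cells M S)"
  unfolding neighbour_cells_def by (simp add: finite_PiE)

lemma cell_in_neighbour_cells:
  assumes S: "S \<in> proper_cells" "p \<in> S" and "q \<in> P"
    and close: "dist p q \<le> real M * pow2 (level S)"
  shows "cell (level S) q \<in> neighbour_cells M S"
proof -
  define j where "j = level S"
  define x where "x = (SOME x. x \<in> S)"
  have "x \<in> S" unfolding x_def using S(2) by (rule someI)
  then have x: "grid_index j x = grid_index j p"
    using cell_level[OF S] unfolding j_def cell_def by blast
  have "grid_index j q i \<in> {grid_index j x i - int M .. grid_index j x i + int M}"
    if "i \<in> Basis" for i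
  proof -
    have "dist q p / pow2 j \<le> real M" using close by (simp add: j_def dist_commute pos_divide_le_eq)
    with grid_index_diff_less[OF that, of j q p] have "\<bar>grid_index j q i - grid_index j p i\<bar> \<le> int M"
      by linarith
    then show ?thesis using x by auto
  qed
  then have "grid_index j q \<in> PiE Basis (\<lambda>i. {grid_index j x i - int M .. grid_index j x i + int M})"
    by (auto simp: PiE_iff grid_index_def)
  moreover have "cell j q = {y \<in> P. grid_index j y = grid_index j q}" by (simp add: cell_def)
  ultimately show ?thesis unfolding neighbour_cells_def j_def x_def by blast
qed

lemma cell_in_neighbour_cells_of_lower:
  assumes "p \<in> P" "q \<in> P" and S: "cell j p \<in> proper_cells" and T: "cell j q \<in> proper_cells"
    and le: "level (cell j p) \<le> level (cell j q)"
    and close: "dist p q \<le> real M * pow2 j"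
  shows "cell j q \<in> neighbour_cells M (cell j p)"
proof -
  define k where "k = level (cell j p)"
  have "j \<le> k" unfolding k_def using level_cell(2)[OF S \<open>p \<in> P\<close>] by simp
  have "cell k q \<subseteq> cell (level (cell j q)) q" using le unfolding k_def by (rule cell_mono)
  also have "\<dots> = cell j q" using cell_level[OF T in_cell_self[OF \<open>q \<in> P\<close>]] .
  finally have "cell k q = cell j q" using cell_mono[OF \<open>j \<le> k\<close>, of q] by blast
  moreover have "dist p q \<le> real M * pow2 k"
    using close pow2_mono[OF \<open>j \<le> k\<close>] by (meson mult_left_mono of_nat_0_le_iff order_trans)
  ultimately show ?thesis
    using cell_in_neighbour_cells[OF S in_cell_self[OF \<open>p \<in> P\<close>] \<open>q \<in> P\<close>] unfolding k_def by simp
qed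

definition edge_cells :: "real \<Rightarrow> 'a \<times> 'a \<Rightarrow> 'a set \<times> 'a set" where
  "edge_cells c pq =
     (cell (edge_level c (fst pq) (snd pq)) (fst pq), cell (edge_level c (fst pq) (snd pq)) (snd pq))"

lemma inj_on_edge_cells:
  assumes sep: "separated_edges c E" and "c > 1"
    and edges: "\<And>u v. {u, v} \<in> E \<Longrightarrow> u \<in> P \<and> v \<in> P \<and> u \<noteq> v"
  shows "inj_on (edge_cells c) {(p, q). {p, q} \<in> E}"
proof (rule inj_onI, clarify)
  fix p q p' q'
  assume pq: "{p, q} \<in> E" and pq': "{p', q'} \<in> E" and eq: "edge_cells c (p, q) = edge_cells c (p', q')"
  define j where "j = edge_level c p q"
  define j' where "j' = edge_level c p' q'"
  have P: "p \<in> P" "q \<in> P" "p \<noteq> q" "p' \<in> P" "q' \<in> P" "p' \<noteq> q'" using edges pq pq' by auto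
  have cells: "cell j p = cell j' p'" "cell j q = cell j' q'"
    using eq unfolding edge_cells_def j_def j'_def by simp_all
  have close: "dist a a' \<le> min (dist p q) (dist p' q') / c"
    if "cell j a = cell j' a'" "a \<in> P" "a' \<in> P" for a a'
  proof -
    have "dist a a' < real DIM('a) * pow2 j"
      using that in_cell_self[of a' j'] by (intro dist_less_if_in_cell) simp
    moreover have "dist a' a < real DIM('a) * pow2 j'"
      using that in_cell_self[of a j] by (intro dist_less_if_in_cell) simp
    ultimately show ?thesis
      using edge_level_bounds(1)[of p q c] edge_level_bounds(1)[of p' q' c] P \<open>c > 1\<close>
      unfolding j_def j'_def by (simp add: dist_commute min_divide_distrib_right)
  qed
  have "{p, q} = {p', q'}"
    using sep pq pq' close[OF cells(1) P(1,4)] close[OF cells(2) P(2,5)]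
    unfolding separated_edges_def by blast
  then consider "p = p'" "q = q'" | "p = q'" "q = p'" by (auto simp: doubleton_eq_iff)
  then show "p = p' \<and> q = q'"
  proof cases
    case 2
    then have "cell j p = cell j q" using cells(2) edge_level_commute unfolding j_def j'_def by simp
    then show ?thesis
      using not_in_cell_edge_level[OF P(3) \<open>c > 1\<close>] in_cell_self[OF P(2)] unfolding j_def by simp
  qed simp
qed

lemma edge_cells_in_neighbour_cells:
  assumes "c > 1" and M: "2 * c * real DIM('a) \<le> real M"
    and "p \<in> P" "q \<in> P" "p \<noteq> q"
  shows "edge_cells c (p, q) \<in> (\<Union>S\<in>proper_cells. {S} \<times> neighbour_cells M S \<union> neighbour_cells M S \<times> {S})"
proof -
  define j where "j = edge_level c p q"
  have "q \<notin> cell j p" "p \<notin> cell j q"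
    using not_in_cell_edge_level[of p q c] not_in_cell_edge_level[of q p c] assms
    unfolding j_def by (simp_all add: edge_level_commute)
  then have S: "cell j p \<in> proper_cells" and T: "cell j q \<in> proper_cells"
    using assms(3,4) unfolding proper_cells_def by blast+
  have "dist p q < 2 * c * real DIM('a) * pow2 j"
    unfolding j_def using assms by (intro edge_level_bounds(2)) auto
  also have "\<dots> \<le> real M * pow2 j" using M by (simp add: mult_right_mono)
  finally have close: "dist p q \<le> real M * pow2 j" "dist q p \<le> real M * pow2 j"
    by (simp_all add: dist_commute)
  have cells: "edge_cells c (p, q) = (cell j p, cell j q)" by (simp add: edge_cells_def j_def)
  consider "level (cell j p) \<le> level (cell j q)" | "level (cell j q) \<le> level (cell j p)" by linarith
  then show ?thesis
  proof cases
    case 1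
    with cell_in_neighbour_cells_of_lower[OF \<open>p \<in> P\<close> \<open>q \<in> P\<close> S T _ close(1)]
    show ?thesis using S unfolding cells by blast
  next
    case 2
    with cell_in_neighbour_cells_of_lower[OF \<open>q \<in> P\<close> \<open>p \<in> P\<close> T S _ close(2)]
    show ?thesis using T unfolding cells by blast
  qed
qed

lemma sum_degree_le:
  assumes sep: "separated_edges c E" and "c > 1" and M: "2 * c * real DIM('a) \<le> real M"
    and edges: "\<And>u v. {u, v} \<in> E \<Longrightarrow> u \<in> P \<and> v \<in> P \<and> u \<noteq> v"
  shows "(\<Sum>v\<in>P. degree E v) \<le> 4 * card P * (2 * M + 1) ^ DIM('a)"
proof -
  define D where "D = {(p, q). {p, q} \<in> E}"
  define N where "N S = {S} \<times> neighbour_cells M S \<union> neighbour_cells M S \<times> {S}" for S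
  have "D = Sigma P (\<lambda>v. {u. u \<noteq> v \<and> {v, u} \<in> E})" unfolding D_def using edges by auto
  moreover have "finite {u. u \<noteq> v \<and> {v, u} \<in> E}" for v
    using finite_P edges by (auto intro: finite_subset[of _ P])
  ultimately have "(\<Sum>v\<in>P. degree E v) = card D"
    unfolding degree_def using finite_P by (simp add: card_SigmaI)
  also have "\<dots> = card (edge_cells c ` D)"
    using inj_on_edge_cells[OF sep \<open>c > 1\<close> edges] unfolding D_def by (simp add: card_image)
  also have "\<dots> \<le> card (\<Union>S\<in>proper_cells. N S)"
  proof (rule card_mono)
    show "finite (\<Union>S\<in>proper_cells. N S)"
      using finite_proper_cells by (simp add: N_def finite_neighbour_cells)
    show "edge_cells c ` D \<subseteq> (\<Union>S\<in>proper_cells. N S)"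
      using edge_cells_in_neighbour_cells[OF \<open>c > 1\<close> M] edges unfolding D_def N_def by auto
  qed
  also have "\<dots> \<le> (\<Sum>S\<in>proper_cells. card (N S))" by (rule card_UN_le[OF finite_proper_cells])
  also have "\<dots> \<le> (\<Sum>S\<in>proper_cells. 2 * (2 * M + 1) ^ DIM('a))"
  proof (rule sum_mono)
    fix S
    have "card (N S) \<le> card ({S} \<times> neighbour_cells M S) + card (neighbour_cells M S \<times> {S})"
      unfolding N_def by (rule card_Un_le)
    also have "\<dots> \<le> 2 * (2 * M + 1) ^ DIM('a)"
      using card_neighbour_cells_le[of M S] by (simp add: card_cartesian_product)
    finally show "card (N S) \<le> 2 * (2 * M + 1) ^ DIM('a)" .
  qed
  also have "\<dots> \<le> 4 * card P * (2 * M + 1) ^ DIM('a)"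
    using card_proper_cells_le by simp
  finally show ?thesis .
qed

end

lemma dyadic_grid_exists:
  assumes "finite P"
  shows "\<exists>R J. dyadic_grid P R J"
proof -
  define R where "R = (\<Sum>p\<in>P. norm p)"
  have "norm p \<le> R" if "p \<in> P" for p
    unfolding R_def using assms that by (intro member_le_sum) auto
  moreover have "2 * R < pow2 (int (nat \<lceil>2 * R\<rceil>))"
  proof -
    have "2 * R \<le> real (nat \<lceil>2 * R\<rceil>)" by linarith
    also have "\<dots> < 2 ^ nat \<lceil>2 * R\<rceil>" by (rule of_nat_less_two_power)
    also have "\<dots> = pow2 (int (nat \<lceil>2 * R\<rceil>))" by (rule pow2_of_nat[symmetric])
    finally show ?thesis .
  qed
  ultimately show ?thesis using assms by (blast intro: dyadic_grid.intro)
qed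

lemma sum_degree_le_if_separated_edges:
  fixes P :: "'a::euclidean_space set"
  assumes "finite P" and "separated_edges c E" "c > 1" "2 * c * real DIM('a) \<le> real M"
    and "\<And>u v. {u, v} \<in> E \<Longrightarrow> u \<in> P \<and> v \<in> P \<and> u \<noteq> v"
  shows "(\<Sum>v\<in>P. degree E v) \<le> 4 * card P * (2 * M + 1) ^ DIM('a)"
  using dyadic_grid_exists[OF assms(1)] dyadic_grid.sum_degree_le[OF _ assms(2-5)] by blast

section \<open>The bounds for the construction\<close>

lemma packing_constant_le:
  assumes "s > 1" "d \<ge> 1"
  shows "real ((2 * nat \<lceil>2 * (2 * s + 2) * real d\<rceil> + 1) ^ d) \<le> (19 * real d) ^ d * s ^ d"
proof -
  have "real (nat \<lceil>2 * (2 * s + 2) * real d\<rceil>) = of_int \<lceil>2 * (2 * s + 2) * real d\<rceil>"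
    using assms(1) by simp
  then have "real (nat \<lceil>2 * (2 * s + 2) * real d\<rceil>) \<le> 2 * (2 * s + 2) * real d + 1"
    using of_int_ceiling_le_add_one[of "2 * (2 * s + 2) * real d"] by linarith
  moreover have "8 * real d + 3 \<le> 11 * s * real d"
    using assms mult_right_mono[of 1 s "real d"] by linarith
  ultimately have "real (2 * nat \<lceil>2 * (2 * s + 2) * real d\<rceil> + 1) \<le> 19 * real d * s"
    by (simp add: algebra_simps)
  then have "real (2 * nat \<lceil>2 * (2 * s + 2) * real d\<rceil> + 1) ^ d \<le> (19 * real d * s) ^ d"
    by (intro power_mono) auto
  then show ?thesis by (simp add: power_mult_distrib)
qed

lemma aspect_ratio_bounds:
  fixes P :: "'a::euclidean_space set"
  assumes "finite P" "card P \<ge> 2"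
  obtains \<delta> where "\<delta> > 0" "aspect_ratio P \<ge> 1"
    and "\<And>u v. u \<in> P \<Longrightarrow> v \<in> P \<Longrightarrow> u \<noteq> v \<Longrightarrow> \<delta> \<le> dist u v \<and> dist u v \<le> \<delta> * aspect_ratio P"
proof -
  define Ds where "Ds = {dist u v | u v. u \<in> P \<and> v \<in> P \<and> u \<noteq> v}"
  define Da where "Da = {dist u v | u v. u \<in> P \<and> v \<in> P}"
  have "Da = (\<lambda>(u, v). dist u v) ` (P \<times> P)" unfolding Da_def by auto
  then have "finite Da" using assms(1) by simp
  then have "finite Ds" by (rule finite_subset[rotated]) (auto simp: Ds_def Da_def)
  have "\<not> card P \<le> Suc 0" using assms(2) by simp
  then obtain u0 v0 where uv0: "u0 \<in> P" "v0 \<in> P" "u0 \<noteq> v0"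
    using card_le_Suc0_iff_eq[OF assms(1)] by blast
  define \<delta> where "\<delta> = Min Ds"
  have "\<delta> \<in> Ds" unfolding \<delta>_def using \<open>finite Ds\<close> uv0 by (intro Min_in) (auto simp: Ds_def)
  then have "\<delta> > 0" by (auto simp: Ds_def)
  have bounds: "\<delta> \<le> dist u v \<and> dist u v \<le> \<delta> * aspect_ratio P"
    if "u \<in> P" "v \<in> P" "u \<noteq> v" for u v
  proof
    show "\<delta> \<le> dist u v" unfolding \<delta>_def using \<open>finite Ds\<close> that by (intro Min_le) (auto simp: Ds_def)
    have "dist u v \<le> Max Da" using \<open>finite Da\<close> that by (intro Max_ge) (auto simp: Da_def)
    also have "Max Da = \<delta> * aspect_ratio P"
      using \<open>\<delta> > 0\<close> unfolding aspect_ratio_def \<delta>_def Da_def Ds_def by simp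
    finally show "dist u v \<le> \<delta> * aspect_ratio P" .
  qed
  moreover have "aspect_ratio P \<ge> 1"
  proof -
    have "\<delta> * 1 \<le> \<delta> * aspect_ratio P" using bounds[OF uv0] by linarith
    then show ?thesis using \<open>\<delta> > 0\<close> by (simp only: mult_le_cancel_left_pos)
  qed
  ultimately show ?thesis using \<open>\<delta> > 0\<close> that by blast
qed

lemma nat_floor_log_plus_one_le:
  assumes "x \<ge> 1"
  shows "real (nat \<lfloor>log 2 x\<rfloor> + 1) \<le> 1 + log 2 x"
proof -
  have "real (nat \<lfloor>log 2 x\<rfloor>) = of_int \<lfloor>log 2 x\<rfloor>" using assms by simp
  then show ?thesis using of_int_floor_le[of "log 2 x"] by simp
qed

lemma degree_uncoord_graph_le:
  fixes P :: "'a::euclidean_space set"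
  assumes "finite P" "card P \<ge> 2" "s > 1" and ord: "set ord = {(p, q). p \<in> P \<and> q \<in> P \<and> p \<noteq> q}"
    and "v \<in> P"
  shows "real (degree (uncoord_graph s ord) v)
           \<le> (19 * real DIM('a)) ^ DIM('a) * (1 + log 2 (aspect_ratio P)) * s ^ DIM('a)"
proof -
  define M where "M = nat \<lceil>2 * (2 * s + 2) * real DIM('a)\<rceil>"
  obtain \<delta> where "\<delta> > 0" "aspect_ratio P \<ge> 1"
    and range: "\<And>u v. u \<in> P \<Longrightarrow> v \<in> P \<Longrightarrow> u \<noteq> v \<Longrightarrow> \<delta> \<le> dist u v \<and> dist u v \<le> \<delta> * aspect_ratio P"
    using aspect_ratio_bounds[OF assms(1,2)] by blast
  note edges = uncoord_graph_edgeD[OF ord]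
  have fin: "finite {u. u \<noteq> v \<and> {v, u} \<in> uncoord_graph s ord}"
    using assms(1) edges by (auto intro: finite_subset[of _ P])
  have deg: "degree (uncoord_graph s ord) v \<le> (nat \<lfloor>log 2 (aspect_ratio P)\<rfloor> + 1) * (2 * M + 1) ^ DIM('a)"
  proof (rule degree_le_log_distance_ratio[OF separated_edges_uncoord_graph[OF \<open>s > 1\<close>] _ \<open>\<delta> > 0\<close> _ fin])
    show "2 * (2 * s + 2) * real DIM('a) \<le> real M" unfolding M_def by (rule real_nat_ceiling_ge)
    show "\<delta> \<le> dist v u \<and> dist v u \<le> \<delta> * aspect_ratio P"
      if "u \<noteq> v" "{v, u} \<in> uncoord_graph s ord" for u
      using range edges[OF that(2)] that(1) by auto
  qed (use \<open>s > 1\<close> in auto)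
  have packing: "real ((2 * M + 1) ^ DIM('a)) \<le> (19 * real DIM('a)) ^ DIM('a) * s ^ DIM('a)"
    unfolding M_def using \<open>s > 1\<close> by (rule packing_constant_le) (simp add: DIM_positive Suc_leI)
  have "real (degree (uncoord_graph s ord) v)
          \<le> real (nat \<lfloor>log 2 (aspect_ratio P)\<rfloor> + 1) * real ((2 * M + 1) ^ DIM('a))"
    using deg by (metis of_nat_le_iff of_nat_mult)
  also have "\<dots> \<le> (1 + log 2 (aspect_ratio P)) * ((19 * real DIM('a)) ^ DIM('a) * s ^ DIM('a))"
    using nat_floor_log_plus_one_le[OF \<open>aspect_ratio P \<ge> 1\<close>] packing \<open>aspect_ratio P \<ge> 1\<close>
    by (intro mult_mono) auto
  finally show ?thesis by (simp add: algebra_simps)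
qed

lemma average_degree_uncoord_graph_le:
  fixes P :: "'a::euclidean_space set"
  assumes "finite P" "s > 1" and ord: "set ord = {(p, q). p \<in> P \<and> q \<in> P \<and> p \<noteq> q}"
  shows "(\<Sum>v\<in>P. real (degree (uncoord_graph s ord) v)) / real (card P)
           \<le> 4 * (19 * real DIM('a)) ^ DIM('a) * s ^ DIM('a)"
proof -
  define M where "M = nat \<lceil>2 * (2 * s + 2) * real DIM('a)\<rceil>"
  have "(\<Sum>v\<in>P. degree (uncoord_graph s ord) v) \<le> 4 * card P * (2 * M + 1) ^ DIM('a)"
    using assms(1) separated_edges_uncoord_graph[OF \<open>s > 1\<close>] _ _ uncoord_graph_edgeD[OF ord]
    by (rule sum_degree_le_if_separated_edges) (use \<open>s > 1\<close> in \<open>auto simp: M_def\<close>)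
  then have "(\<Sum>v\<in>P. real (degree (uncoord_graph s ord) v)) \<le> 4 * real (card P) * real ((2 * M + 1) ^ DIM('a))"
    by (metis (mono_tags) of_nat_le_iff of_nat_mult of_nat_numeral of_nat_sum)
  also have "\<dots> \<le> 4 * real (card P) * ((19 * real DIM('a)) ^ DIM('a) * s ^ DIM('a))"
    unfolding M_def using \<open>s > 1\<close>
    by (intro mult_left_mono packing_constant_le) (simp_all add: DIM_positive Suc_leI)
  finally show ?thesis
    using \<open>s > 1\<close> by (cases "card P = 0") (simp_all add: divide_le_eq algebra_simps)
qed

theorem theorem10:
  "\<exists>C>0. \<forall>(P :: 'a::euclidean_space set) (s::real) (ord :: ('a \<times> 'a) list).
     finite P \<and> card P \<ge> 2 \<and> s > 1 \<and> distinct ord \<and>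
     set ord = {(p, q). p \<in> P \<and> q \<in> P \<and> p \<noteq> q} \<longrightarrow>
       (\<forall>v\<in>P. real (degree (uncoord_graph s ord) v)
                  \<le> C * (1 + log 2 (aspect_ratio P)) * s ^ DIM('a)) \<and>
       (\<Sum>v\<in>P. real (degree (uncoord_graph s ord) v)) / real (card P) \<le> C * s ^ DIM('a)"
proof (intro exI conjI allI impI ballI)
  define K where "K = (19 * real DIM('a)) ^ DIM('a)"
  show "4 * K > 0" unfolding K_def by simp
  fix P :: "'a set" and s :: real and ord :: "('a \<times> 'a) list" and v
  assume H: "finite P \<and> card P \<ge> 2 \<and> s > 1 \<and> distinct ord \<and> set ord = {(p, q). p \<in> P \<and> q \<in> P \<and> p \<noteq> q}"
  then show "(\<Sum>v\<in>P. real (degree (uncoord_graph s ord) v)) / real (card P) \<le> 4 * K * s ^ DIM('a)"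
    using average_degree_uncoord_graph_le[of P s ord] unfolding K_def by blast
  assume "v \<in> P"
  with H have "real (degree (uncoord_graph s ord) v) \<le> K * (1 + log 2 (aspect_ratio P)) * s ^ DIM('a)"
    using degree_uncoord_graph_le[of P s ord v] unfolding K_def by blast
  moreover have "0 \<le> K * (1 + log 2 (aspect_ratio P)) * s ^ DIM('a)"
    using calculation of_nat_0_le_iff order_trans by blast
  ultimately show "real (degree (uncoord_graph s ord) v) \<le> 4 * K * (1 + log 2 (aspect_ratio P)) * s ^ DIM('a)"
    by linarith
qed

end
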